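(* Let $\mathscr Q_n$ be a non-singular quadric in $\mathrm{PG}(n,2)$ of projective index $g\geq 1$, with point-graph $\Gamma$. For each integer $s$ with $0\leq s<g$, let $\Gamma_s$ be the graph obtained from $\Gamma$ by the Godsil–McKay switching with respect to the partition $\{\mathcal X_s,\mathcal Y_s\}$ (defined below). Then $\{\mathcal X_s,\mathcal Y_s\}$ is a Godsil–McKay partition of $\Gamma$, and $\Gamma_s$ is a strongly regular graph with the same parameters as $\Gamma$.
   Context: A non-singular quadric $\mathscr Q_n$ in $\mathrm{PG}(n,q)$ is the point set of a non-degenerate quadric. Its projective index $g$ is the largest dimension of a projective subspace contained in $\mathscr Q_n$; the $g$-dimensional subspaces contained in $\mathscr Q_n$ are its generators. If $n=2r$, $\mathscr Q_n$ is the parabolic quadric $\mathcal P_{2r}$ with $g=r-1$; if $n=2r+1$, it is either the elliptic quadric $\mathcal E_{2r+1}$ with $g=r-1$ or the hyperbolic quadric $\mathcal H_{2r+1}$ with $g=r$. The point-graph $\Gamma$ of $\mathscr Q_n$ has vertex set the points of $\mathscr Q_n$, two distinct points being adjacent iff the line joining them is contained in $\mathscr Q_n$. Fix an integer $s$ with $0\le s<g$ and an $s$-dimensional subspace $\alpha_s$ contained in $\mathscr Q_n$. A point $X$ of $\mathscr Q_n$ has type (i) if $X\in\alpha_s$; type (ii) if $X\notin\alpha_s$ and the $(s+1)$-space $\langle \alpha_s,X\rangle$ is contained in $\mathscr Q_n$; type (iii) otherwise. $\mathcal X_s$ is the set of type (ii) points, $\mathcal Y_s$ the set of points of type (i) or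 (iii). A Godsil–McKay partition of a graph is a partition $\{\mathcal X,\mathcal Y\}$ of its vertices such that $\mathcal X$ induces a regular subgraph and each vertex of $\mathcal Y$ is adjacent to $0$, $\frac12|\mathcal X|$ or $|\mathcal X|$ vertices of $\mathcal X$. The graph $\Gamma_s$ has the same vertex set as $\Gamma$ and the same edges, except that for each vertex $R\in\mathcal Y_s$ having exactly $\frac12|\mathcal X_s|$ neighbours in $\mathcal X_s$ (in $\Gamma$), those edges are deleted and $R$ is joined instead to the other $\frac12|\mathcal X_s|$ vertices of $\mathcal X_s$. *)

theory Defs
  imports "HOL-Analysis.Analysis" "HOL-Library.Z2"
begin

text \<open>The underlying vector space of PG(n,2) is bit^'n with CARD('n) = n+1,
  bit = GF(2). Since the only nonzero scalar is 1, projective points of PG(n,2)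
  are exactly the nonzero vectors; a projective d-space is the set of nonzero
  vectors of a linear subspace of (vector-space) dimension d+1.\<close>

definition polar :: "(bit^'n \<Rightarrow> bit) \<Rightarrow> bit^'n \<Rightarrow> bit^'n \<Rightarrow> bit" where
  "polar Q x y = Q (x + y) - Q x - Q y"

definition quadratic_form :: "(bit^'n \<Rightarrow> bit) \<Rightarrow> bool" where
  "quadratic_form Q \<longleftrightarrow>
     (\<forall>c x. Q (c *s x) = c^2 * Q x) \<and>
     (\<forall>x y z. polar Q (x + y) z = polar Q x z + polar Q y z) \<and>
     (\<forall>c x z. polar Q (c *s x) z = c * polar Q x z) \<and>
     (\<forall>x y. polar Q x y = polar Q y x)"

definition nonsingular_quadric :: "(bit^'n \<Rightarrow> bit) \<Rightarrow> bool" where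
  "nonsingular_quadric Q \<longleftrightarrow> quadratic_form Q \<and>
     \<not> (\<exists>x. x \<noteq> 0 \<and> Q x = 0 \<and> (\<forall>y. polar Q x y = 0))"

definition qpoints :: "(bit^'n \<Rightarrow> bit) \<Rightarrow> (bit^'n) set" where
  "qpoints Q = {x. x \<noteq> 0 \<and> Q x = 0}"

definition on_quadric :: "(bit^'n \<Rightarrow> bit) \<Rightarrow> (bit^'n) set \<Rightarrow> bool" where
  "on_quadric Q W \<longleftrightarrow> (\<forall>v\<in>W. v \<noteq> 0 \<longrightarrow> Q v = 0)"

definition quadric_subspace :: "(bit^'n \<Rightarrow> bit) \<Rightarrow> nat \<Rightarrow> (bit^'n) set \<Rightarrow> bool" where
  "quadric_subspace Q d W \<longleftrightarrow> vec.subspace W \<and> vec.dim W = d + 1 \<and> on_quadric Q W"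

definition projective_index :: "(bit^'n \<Rightarrow> bit) \<Rightarrow> nat \<Rightarrow> bool" where
  "projective_index Q g \<longleftrightarrow> (\<exists>W. quadric_subspace Q g W) \<and>
     (\<forall>d W. quadric_subspace Q d W \<longrightarrow> d \<le> g)"

definition qadj :: "(bit^'n \<Rightarrow> bit) \<Rightarrow> bit^'n \<Rightarrow> bit^'n \<Rightarrow> bool" where
  "qadj Q x y \<longleftrightarrow> x \<noteq> y \<and> on_quadric Q (vec.span {x, y})"

text \<open>Type (ii) points w.r.t. the linear subspace A underlying alpha_s.\<close>
definition Xset :: "(bit^'n \<Rightarrow> bit) \<Rightarrow> (bit^'n) set \<Rightarrow> (bit^'n) set" where
  "Xset Q A = {x \<in> qpoints Q. x \<notin> A \<and> on_quadric Q (vec.span (insert x A))}"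

definition Yset :: "(bit^'n \<Rightarrow> bit) \<Rightarrow> (bit^'n) set \<Rightarrow> (bit^'n) set" where
  "Yset Q A = qpoints Q - Xset Q A"

definition nbrs :: "'a set \<Rightarrow> ('a \<Rightarrow> 'a \<Rightarrow> bool) \<Rightarrow> 'a \<Rightarrow> 'a set" where
  "nbrs S E x = {y \<in> S. E x y}"

definition godsil_mckay_partition ::
  "'a set \<Rightarrow> ('a \<Rightarrow> 'a \<Rightarrow> bool) \<Rightarrow> 'a set \<Rightarrow> 'a set \<Rightarrow> bool" where
  "godsil_mckay_partition V E X Y \<longleftrightarrow>
     X \<noteq> {} \<and> Y \<noteq> {} \<and> X \<union> Y = V \<and> X \<inter> Y = {} \<and>
     (\<exists>k. \<forall>x\<in>X. card (nbrs X E x) = k) \<and>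
     (\<forall>y\<in>Y. card (nbrs X E y) = 0 \<or> 2 * card (nbrs X E y) = card X
              \<or> card (nbrs X E y) = card X)"

definition gm_switch ::
  "'a set \<Rightarrow> ('a \<Rightarrow> 'a \<Rightarrow> bool) \<Rightarrow> 'a set \<Rightarrow> 'a set \<Rightarrow> 'a \<Rightarrow> 'a \<Rightarrow> bool" where
  "gm_switch V E X Y x y =
     (if (x \<in> Y \<and> y \<in> X \<and> 2 * card (nbrs X E x) = card X) \<or>
         (y \<in> Y \<and> x \<in> X \<and> 2 * card (nbrs X E y) = card X)
      then \<not> E x y else E x y)"

definition strongly_regular ::
  "'a set \<Rightarrow> ('a \<Rightarrow> 'a \<Rightarrow> bool) \<Rightarrow> nat \<Rightarrow> nat \<Rightarrow> nat \<Rightarrow> nat \<Rightarrow> bool" where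
  "strongly_regular V E v k l m \<longleftrightarrow>
     finite V \<and> card V = v \<and>
     (\<forall>x\<in>V. \<not> E x x) \<and> (\<forall>x\<in>V. \<forall>y\<in>V. E x y \<longrightarrow> E y x) \<and>
     (\<forall>x\<in>V. card (nbrs V E x) = k) \<and>
     (\<forall>x\<in>V. \<forall>y\<in>V. x \<noteq> y \<and> E x y \<longrightarrow> card (nbrs V E x \<inter> nbrs V E y) = l) \<and>
     (\<forall>x\<in>V. \<forall>y\<in>V. x \<noteq> y \<and> \<not> E x y \<longrightarrow> card (nbrs V E x \<inter> nbrs V E y) = m)"

end

theory Submission
  imports Defs
begin

text \<open>
  Everything is counted with the additive character of GF(2). For a subspace D, the number of
  singular vectors orthogonal to D is an average of character sums over D; when D is totally
  singular this depends only on |D|, and adjoining to a totally singular A a vector not orthogonal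
  to A exactly halves it. Applied to the spans of one or two points this shows that the point
  graph is strongly regular; applied to A and to A + x it shows that the type (ii) points induce a
  regular graph and that every point of type (iii) sees exactly half of them, while points of
  \<alpha>_s see all of them. Finally, Godsil--McKay switching conjugates the adjacency matrix
  by an orthogonal involution commuting with J, which preserves the equation
  A^2 = (k - \<mu>) I + (\<lambda> - \<mu>) A + \<mu> J characterising strong regularity.
\<close>

section \<open>Vectors over GF(2)\<close>

text \<open>Z2 rewrites + and * on bit to xor and conjunction; we keep them as field operations.\<close>

declare add_bit_eq_xor [simp del] mult_bit_eq_and [simp del]

instance bit :: finite
proof
  have "(UNIV :: bit set) = {0, 1}"
    by (auto intro: bit.exhaust)
  then show "finite (UNIV :: bit set)"
    by (metis finite.emptyI finite.insertI)
qed

lemma bit_add_self [simp]: "(b::bit) + b = 0"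
  by (cases b) simp_all

lemma vec_bit_add_self [simp]: "(x::bit^'n) + x = 0"
  by (simp add: vec_eq_iff)

lemma vec_bit_add_cancel_left [simp]: "(x::bit^'n) + (x + y) = y"
  by (simp add: add.assoc [symmetric])

lemma vec_bit_add_cancel_right [simp]: "(y::bit^'n) + x + x = y"
  by (simp add: add.assoc)

lemma vec_bit_add_eq_0_iff: "(x::bit^'n) + y = 0 \<longleftrightarrow> x = y"
  by (metis vec_bit_add_self vec_bit_add_cancel_left add_0_right)

lemma scale_bit: "(c::bit) *s (x::bit^'n) = (if c = 0 then 0 else x)"
  by (cases c) (simp_all add: vec_eq_iff)

lemma subspace_bit_iff:
  "vec.subspace (D :: (bit^'n) set) \<longleftrightarrow> 0 \<in> D \<and> (\<forall>a\<in>D. \<forall>b\<in>D. a + b \<in> D)"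
  unfolding vec.subspace_def by (auto simp: scale_bit)

lemma span_singleton_bit: "vec.span {x} = {0, x::bit^'n}"
proof -
  have "range (\<lambda>c::bit. c *s x) = {0, x}"
    by (auto simp: scale_bit image_iff)
  then show ?thesis
    by (simp add: vec.span_singleton)
qed

lemma span_pair_bit: "vec.span {x, y} = {0, x, y, (x::bit^'n) + y}"
proof
  show "vec.span {x, y} \<subseteq> {0, x, y, x + y}"
    by (rule vec.span_minimal) (auto simp: subspace_bit_iff add_ac)
  show "{0, x, y, x + y} \<subseteq> vec.span {x, y}"
    by (auto intro: vec.span_add vec.span_base vec.span_zero)
qed

lemma span_insert_subspace:
  fixes A :: "(bit^'n) set"
  assumes "vec.subspace A"
  shows "vec.span (insert x A) = A \<union> (+) x ` A"
proof
  have "vec.subspace (A \<union> (+) x ` A)"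
    using assms unfolding subspace_bit_iff by (auto simp: add_ac intro!: imageI)
  moreover have "insert x A \<subseteq> A \<union> (+) x ` A"
    using assms by (force simp: subspace_bit_iff)
  ultimately show "vec.span (insert x A) \<subseteq> A \<union> (+) x ` A"
    by (rule vec.span_minimal [rotated])
  show "A \<union> (+) x ` A \<subseteq> vec.span (insert x A)"
    by (auto intro: vec.span_add vec.span_base)
qed

lemma translate_disjoint_subspace:
  fixes A :: "(bit^'n) set"
  assumes "vec.subspace A" and "x \<notin> A"
  shows "A \<inter> (+) x ` A = {}"
  using assms by (auto simp: subspace_bit_iff) (metis vec_bit_add_cancel_right)

lemma card_span_insert_subspace:
  fixes A :: "(bit^'n) set"
  assumes "vec.subspace A" and "x \<notin> A"
  shows "card (vec.span (insert x A)) = 2 * card A"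
proof -
  have "inj_on ((+) x) A"
    by (rule inj_onI) simp
  then show ?thesis
    using translate_disjoint_subspace [OF assms]
    by (simp add: span_insert_subspace [OF assms(1)] card_Un_disjoint card_image)
qed

lemma sum_span_insert_subspace:
  fixes A :: "(bit^'n) set"
  assumes "vec.subspace A" and "x \<notin> A"
  shows "(\<Sum>d\<in>vec.span (insert x A). f d) = (\<Sum>a\<in>A. f a) + (\<Sum>a\<in>A. f (x + a))"
proof -
  have "inj_on ((+) x) A"
    by (rule inj_onI) simp
  then show ?thesis
    using translate_disjoint_subspace [OF assms]
    by (simp add: span_insert_subspace [OF assms(1)] sum.union_disjoint sum.reindex)
qed

lemma card_span_independent_bit:
  fixes B :: "(bit^'n) set"
  assumes "vec.independent B"
  shows "card (vec.span B) = 2 ^ card B"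
proof -
  have "finite B"
    by simp
  then show ?thesis
    using assms
  proof (induction B rule: finite_induct)
    case (insert b B)
    then have "vec.independent B" and "b \<notin> vec.span B"
      by (simp_all add: vec.independent_insert)
    then have "card (vec.span (insert b (vec.span B))) = 2 * card (vec.span B)"
      by (intro card_span_insert_subspace) simp_all
    moreover have "vec.span (insert b (vec.span B)) = vec.span (insert b B)"
      by (simp only: vec.span_insert vec.span_span)
    ultimately show ?case
      using insert \<open>vec.independent B\<close> by simp
  qed simp
qed

lemma card_subspace_bit:
  fixes U :: "(bit^'n) set"
  assumes "vec.subspace U"
  shows "card U = 2 ^ vec.dim U"
proof -
  obtain B where "B \<subseteq> U" "vec.independent B" "U \<subseteq> vec.span B" "card B = vec.dim U"
    by (rule vec.basis_exists)
  then show ?thesis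
    using vec.span_subspace [of B U] assms card_span_independent_bit by metis
qed

section \<open>Quadratic forms over GF(2)\<close>

lemma add_polar: "Q (x + y) = Q x + Q y + polar Q x y"
  unfolding polar_def by (cases "Q x"; cases "Q y"; cases "Q (x + y)") simp_all

context
  fixes Q :: "bit^'n \<Rightarrow> bit"
  assumes Q: "quadratic_form Q"
begin

lemma quadratic_form_zero: "Q 0 = 0"
  using Q unfolding quadratic_form_def by (metis power_zero_numeral mult_zero_left scale_bit)

lemma polar_commute: "polar Q x y = polar Q y x"
  using Q unfolding quadratic_form_def by blast

lemma polar_add_left: "polar Q (x + y) z = polar Q x z + polar Q y z"
  using Q unfolding quadratic_form_def by blast

lemma polar_add_right: "polar Q z (x + y) = polar Q z x + polar Q z y"
  using polar_add_left polar_commute by metis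

lemma polar_self: "polar Q x x = 0"
  using quadratic_form_zero add_polar [of Q x x] by (cases "Q x") simp_all

lemma polar_zero_left: "polar Q 0 y = 0"
  using polar_add_left [of 0 0 y] by simp

lemma polar_zero_right: "polar Q y 0 = 0"
  using polar_commute polar_zero_left by metis

lemma subspace_polar_kernel: "vec.subspace {d. polar Q d w = 0}"
  by (simp add: subspace_bit_iff polar_zero_left polar_add_left)

lemma on_quadric_imp_polar_zero:
  assumes "vec.subspace W" "on_quadric Q W" "a \<in> W" "b \<in> W"
  shows "polar Q a b = 0"
proof -
  have "\<forall>v\<in>W. Q v = 0"
    using assms(2) quadratic_form_zero by (auto simp: on_quadric_def)
  moreover have "a + b \<in> W"
    using assms by (simp add: subspace_bit_iff)
  ultimately show ?thesis
    using add_polar [of Q a b] assms(3,4) by simp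
qed

lemma on_quadric_span_insert_iff:
  assumes "vec.subspace A" "on_quadric Q A"
  shows "on_quadric Q (vec.span (insert x A)) \<longleftrightarrow> Q x = 0 \<and> (\<forall>a\<in>A. polar Q x a = 0)"
proof -
  have QA: "\<forall>a\<in>A. Q a = 0"
    using assms(2) quadratic_form_zero by (auto simp: on_quadric_def)
  have "on_quadric Q (vec.span (insert x A)) \<longleftrightarrow> (\<forall>a\<in>A. Q (x + a) = 0)"
    using QA quadratic_form_zero
    by (auto simp: on_quadric_def span_insert_subspace [OF assms(1)]) (metis UnI2 imageI)
  also have "\<dots> \<longleftrightarrow> Q x = 0 \<and> (\<forall>a\<in>A. polar Q x a = 0)"
  proof -
    have "0 \<in> A"
      using assms(1) by (simp add: subspace_bit_iff)
    then have "(\<forall>a\<in>A. Q (x + a) = 0) \<longrightarrow> Q x = 0"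
      by force
    then show ?thesis
      using QA by (auto simp: add_polar [of Q x])
  qed
  finally show ?thesis .
qed

end

section \<open>Character sums\<close>

definition bit_char :: "bit \<Rightarrow> real" where
  "bit_char b = (if b = 0 then 1 else -1)"

lemma bit_char_add: "bit_char (a + b) = bit_char a * bit_char b"
  by (cases a; cases b) (simp_all add: bit_char_def)

lemma sum_bit_char_additive:
  fixes D :: "(bit^'n) set" and f :: "bit^'n \<Rightarrow> bit"
  assumes D: "vec.subspace D" and f: "\<And>a b. a \<in> D \<Longrightarrow> b \<in> D \<Longrightarrow> f (a + b) = f a + f b"
  shows "(\<Sum>d\<in>D. bit_char (f d)) = (if \<forall>d\<in>D. f d = 0 then real (card D) else 0)"
proof (cases "\<forall>d\<in>D. f d = 0")
  case False
  then obtain d0 where d0: "d0 \<in> D" "f d0 = 1"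
    by auto
  have "bij_betw ((+) d0) D D"
    by (rule bij_betwI [where g = "(+) d0"]) (use D d0 in \<open>auto simp: subspace_bit_iff\<close>)
  then have "(\<Sum>d\<in>D. bit_char (f d)) = (\<Sum>d\<in>D. bit_char (f (d0 + d)))"
    using sum.reindex_bij_betw [of "(+) d0" D D "\<lambda>d. bit_char (f d)"] by simp
  also have "\<dots> = - (\<Sum>d\<in>D. bit_char (f d))"
    using d0 by (simp add: f bit_char_add sum_negf bit_char_def [of 1])
  finally have "(\<Sum>d\<in>D. bit_char (f d)) = 0"
    by simp
  then show ?thesis
    unfolding if_not_P [OF False] .
qed (simp add: bit_char_def)

lemma card_kernel_half:
  fixes D :: "(bit^'n) set" and f :: "bit^'n \<Rightarrow> bit"
  assumes "vec.subspace D" and "\<And>a b. a \<in> D \<Longrightarrow> b \<in> D \<Longrightarrow> f (a + b) = f a + f b"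
    and "d0 \<in> D" "f d0 \<noteq> 0"
  shows "2 * card {d \<in> D. f d = 0} = card D"
proof -
  have "(\<Sum>d\<in>D. bit_char (f d)) = (\<Sum>d\<in>D. 2 * of_bool (d \<in> {d \<in> D. f d = 0}) - 1)"
    by (rule sum.cong) (auto simp: bit_char_def)
  also have "\<dots> = 2 * real (card {d \<in> D. f d = 0}) - real (card D)"
    by (simp add: sum_subtractf sum_distrib_left flip: sum.inter_restrict) (simp add: Int_def)
  moreover have "\<not> (\<forall>d\<in>D. f d = 0)"
    using assms(3,4) by blast
  ultimately have "real (2 * card {d \<in> D. f d = 0}) = real (card D)"
    using sum_bit_char_additive [OF assms(1,2)] by simp
  then show ?thesis
    by (simp only: of_nat_eq_iff)
qed

section \<open>Counting singular vectors orthogonal to a subspace\<close>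

locale nonsingular_quadric_form =
  fixes Q :: "bit^'n \<Rightarrow> bit"
  assumes nonsingular: "nonsingular_quadric Q"
begin

lemma quadratic_form: "quadratic_form Q"
  using nonsingular by (simp add: nonsingular_quadric_def)

lemmas Q_zero = quadratic_form_zero [OF quadratic_form]
  and polar_commute = polar_commute [OF quadratic_form]
  and polar_add_left = polar_add_left [OF quadratic_form]
  and polar_add_right = polar_add_right [OF quadratic_form]
  and polar_self = polar_self [OF quadratic_form]
  and polar_zero_left = polar_zero_left [OF quadratic_form]
  and polar_zero_right = polar_zero_right [OF quadratic_form]

definition in_radical :: "bit^'n \<Rightarrow> bool" where
  "in_radical u \<longleftrightarrow> (\<forall>w. polar Q u w = 0)"

definition char_sum :: real where
  "char_sum = (\<Sum>w\<in>UNIV. bit_char (Q w))"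

definition perp_weight :: "bit^'n \<Rightarrow> real" where
  "perp_weight d = (if in_radical d then real CARD(bit^'n) else 0) + bit_char (Q d) * char_sum"

definition singular_perp :: "(bit^'n) set \<Rightarrow> (bit^'n) set" where
  "singular_perp D = {w. Q w = 0 \<and> (\<forall>d\<in>D. polar Q d w = 0)}"

lemma in_radical_singular_eq_0: "in_radical u \<Longrightarrow> Q u = 0 \<Longrightarrow> u = 0"
  using nonsingular unfolding nonsingular_quadric_def in_radical_def by blast

lemma in_radical_0: "in_radical 0"
  by (simp add: in_radical_def polar_zero_left)

lemma sum_bit_char_polar:
  "(\<Sum>w\<in>UNIV. bit_char (polar Q u w)) = (if in_radical u then real CARD(bit^'n) else 0)"
  using sum_bit_char_additive [of UNIV "polar Q u"]
  by (simp add: subspace_bit_iff polar_add_right in_radical_def)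

lemma sum_bit_char_add_polar:
  "(\<Sum>w\<in>UNIV. bit_char (Q w + polar Q u w)) = bit_char (Q u) * char_sum"
proof -
  have "bij_betw ((+) u) UNIV UNIV"
    by (rule bij_betwI [where g = "(+) u"]) simp_all
  then have "char_sum = (\<Sum>w\<in>UNIV. bit_char (Q (u + w)))"
    unfolding char_sum_def
    using sum.reindex_bij_betw [of "(+) u" UNIV UNIV "\<lambda>w. bit_char (Q w)"] by simp
  also have "\<dots> = bit_char (Q u) * (\<Sum>w\<in>UNIV. bit_char (Q w + polar Q u w))"
    by (simp add: add_polar [of Q u] bit_char_add sum_distrib_left add.assoc)
  finally show ?thesis
    by (cases "Q u") (simp_all add: bit_char_def)
qed

text \<open>The indicator of Q w = 0 is (1 + bit_char (Q w)) / 2, and that of w \<perp> D is the average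
  of bit_char (polar Q d w) over d \<in> D; summing over w and exchanging the sums gives the weights.\<close>

lemma card_singular_perp:
  assumes D: "vec.subspace D"
  shows "2 * real (card D) * real (card (singular_perp D)) = (\<Sum>d\<in>D. perp_weight d)"
proof -
  have perp: "(\<Sum>d\<in>D. bit_char (polar Q d w))
      = real (card D) * of_bool (\<forall>d\<in>D. polar Q d w = 0)" for w
    using sum_bit_char_additive [OF D, of "\<lambda>d. polar Q d w"] by (simp add: polar_add_left)
  have "(1 + bit_char (Q w)) * (\<Sum>d\<in>D. bit_char (polar Q d w))
      = 2 * real (card D) * of_bool (w \<in> singular_perp D)" for w
    unfolding perp by (simp add: singular_perp_def bit_char_def)
  then have "2 * real (card D) * real (card (singular_perp D))
      = (\<Sum>w\<in>UNIV. (1 + bit_char (Q w)) * (\<Sum>d\<in>D. bit_char (polar Q d w)))"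
    by (simp flip: sum_distrib_left)
  also have "\<dots> = (\<Sum>d\<in>D. \<Sum>w\<in>UNIV. bit_char (polar Q d w) + bit_char (Q w + polar Q d w))"
    by (simp add: sum_distrib_left distrib_right bit_char_add flip: sum.distrib)
      (rule sum.swap)
  also have "\<dots> = (\<Sum>d\<in>D. perp_weight d)"
    by (simp add: perp_weight_def sum.distrib sum_bit_char_polar sum_bit_char_add_polar)
  finally show ?thesis .
qed

lemma singular_perp_insert: "singular_perp (insert x D) = {w \<in> singular_perp D. polar Q x w = 0}"
  by (auto simp: singular_perp_def)

lemma singular_perp_span: "singular_perp (vec.span S) = singular_perp S"
proof
  show "singular_perp (vec.span S) \<subseteq> singular_perp S"
    using vec.span_base by (auto simp: singular_perp_def)
  show "singular_perp S \<subseteq> singular_perp (vec.span S)"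
  proof
    fix w assume w: "w \<in> singular_perp S"
    have "vec.span S \<subseteq> {d. polar Q d w = 0}"
      by (rule vec.span_minimal) (use w subspace_polar_kernel [OF quadratic_form] in
        \<open>auto simp: singular_perp_def\<close>)
    then show "w \<in> singular_perp (vec.span S)"
      using w by (auto simp: singular_perp_def)
  qed
qed

lemma subset_singular_perp:
  assumes "vec.subspace W" "on_quadric Q W"
  shows "W \<subseteq> singular_perp W"
  using assms on_quadric_imp_polar_zero [OF quadratic_form] Q_zero
  by (auto simp: singular_perp_def on_quadric_def)

lemma sum_perp_weight_on_quadric:
  assumes "vec.subspace D" "on_quadric Q D"
  shows "(\<Sum>d\<in>D. perp_weight d) = real CARD(bit^'n) + real (card D) * char_sum"
proof -
  have "perp_weight d = real CARD(bit^'n) * of_bool (d = 0) + char_sum" if "d \<in> D" for d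
    using that assms(2) in_radical_singular_eq_0 in_radical_0 Q_zero
    by (auto simp: perp_weight_def on_quadric_def bit_char_def)
  moreover have "0 \<in> D"
    using assms(1) by (simp add: subspace_bit_iff)
  ultimately show ?thesis
    by (simp add: sum.distrib)
qed

lemma card_singular_perp_on_quadric:
  assumes "vec.subspace D" "on_quadric Q D"
  shows "2 * real (card D) * real (card (singular_perp D)) =
    real CARD(bit^'n) + real (card D) * char_sum"
  using card_singular_perp [OF assms(1)] sum_perp_weight_on_quadric [OF assms] by simp

text \<open>Adjoining a vector y that is not orthogonal to the totally singular subspace A halves the
  singular perp: on the coset y + A the weights cancel, as polar Q y is a nonzero linear form on A.\<close>

lemma card_singular_perp_insert_nonperp:
  assumes A: "vec.subspace A" "on_quadric Q A" and a: "a \<in> A" "polar Q y a \<noteq> 0"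
  shows "2 * card (singular_perp (insert y A)) = card (singular_perp A)"
proof -
  have y: "y \<notin> A"
    using on_quadric_imp_polar_zero [OF quadratic_form A _ a(1)] a(2) by blast
  have QA: "Q b = 0" if "b \<in> A" for b
    using A(2) that Q_zero by (cases "b = 0") (auto simp: on_quadric_def)
  have "\<not> in_radical (y + b)" if "b \<in> A" for b
    using on_quadric_imp_polar_zero [OF quadratic_form A that a(1)] a(2)
    by (auto simp: in_radical_def polar_add_left intro!: exI [of _ a])
  then have "(\<Sum>b\<in>A. perp_weight (y + b))
      = bit_char (Q y) * char_sum * (\<Sum>b\<in>A. bit_char (polar Q y b))"
    by (simp add: perp_weight_def add_polar [of Q y] bit_char_add sum_distrib_left mult_ac QA)
  also have "(\<Sum>b\<in>A. bit_char (polar Q y b)) = 0"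
    using sum_bit_char_additive [OF A(1), of "polar Q y"] a by (auto simp: polar_add_right)
  finally have coset: "(\<Sum>b\<in>A. perp_weight (y + b)) = 0"
    by simp
  have "2 * real (card (vec.span (insert y A))) * real (card (singular_perp (insert y A)))
      = real CARD(bit^'n) + real (card A) * char_sum"
    using card_singular_perp [of "vec.span (insert y A)"] sum_perp_weight_on_quadric [OF A] coset
      sum_span_insert_subspace [OF A(1) y, of perp_weight]
    by (simp add: singular_perp_span)
  also have "\<dots> = 2 * real (card A) * real (card (singular_perp A))"
    using card_singular_perp_on_quadric [OF A] by simp
  finally have "real (card A) * (2 * real (card (singular_perp (insert y A))))
      = real (card A) * real (card (singular_perp A))"
    by (simp add: card_span_insert_subspace [OF A(1) y])
  moreover have "card A \<noteq> 0"
    using a(1) by (simp add: card_eq_0_iff) blast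
  ultimately have "real (2 * card (singular_perp (insert y A))) = real (card (singular_perp A))"
    by simp
  then show ?thesis
    by (simp only: of_nat_eq_iff)
qed

end

section \<open>The point graph\<close>

lemma of_nat_card_Diff_subset:
  assumes "finite S" "F \<subseteq> S"
  shows "real (card (S - F)) = real (card S) - real (card F)"
  using assms by (simp add: card_Diff_subset card_mono finite_subset)

lemma eq_nat_floor_if_of_nat_eq: "real k = c \<Longrightarrow> k = nat \<lfloor>c\<rfloor>"
  by auto

lemma qadj_irrefl: "\<not> qadj Q x x"
  by (simp add: qadj_def)

lemma qadj_commute: "qadj Q x y \<longleftrightarrow> qadj Q y x"
  by (auto simp: qadj_def insert_commute)

context nonsingular_quadric_form
begin

lemma qadj_iff_polar:
  assumes "x \<in> qpoints Q" "y \<in> qpoints Q"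
  shows "qadj Q x y \<longleftrightarrow> x \<noteq> y \<and> polar Q x y = 0"
proof -
  have "Q x = 0" "Q y = 0"
    using assms by (simp_all add: qpoints_def)
  then have "on_quadric Q (vec.span {x, y}) \<longleftrightarrow> (x + y \<noteq> 0 \<longrightarrow> polar Q x y = 0)"
    by (simp add: on_quadric_def span_pair_bit add_polar [of Q x y])
  then show ?thesis
    by (auto simp: qadj_def vec_bit_add_eq_0_iff)
qed

lemma nbrs_Int_point_graph:
  assumes "x \<in> qpoints Q" "y \<in> qpoints Q"
  shows "nbrs (qpoints Q) (qadj Q) x \<inter> nbrs (qpoints Q) (qadj Q) y
    = singular_perp {x, y} - {0, x, y}"
  using assms by (auto simp: nbrs_def qadj_iff_polar singular_perp_def qpoints_def)

lemma nbrs_point_graph: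
  assumes "x \<in> qpoints Q"
  shows "nbrs (qpoints Q) (qadj Q) x = singular_perp {x} - {0, x}"
  using nbrs_Int_point_graph [OF assms assms] by simp

lemma card_singular_perp_point:
  assumes "x \<in> qpoints Q"
  shows "4 * real (card (singular_perp {x})) = real CARD(bit^'n) + 2 * char_sum"
proof -
  have "on_quadric Q (vec.span {x})" "card (vec.span {x}) = 2"
    using assms by (simp_all add: span_singleton_bit on_quadric_def qpoints_def)
  then show ?thesis
    using card_singular_perp_on_quadric [OF vec.subspace_span, of "{x}"]
    by (simp add: singular_perp_span)
qed

lemma card_singular_perp_line:
  assumes "x \<in> qpoints Q" "y \<in> qpoints Q" "x \<noteq> y" "polar Q x y = 0"
  shows "8 * real (card (singular_perp {x, y})) = real CARD(bit^'n) + 4 * char_sum"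
proof -
  have "x \<noteq> 0" "y \<noteq> 0" "Q x = 0" "Q y = 0" "x + y \<noteq> 0" "x + y \<noteq> x" "x + y \<noteq> y"
    using assms by (auto simp: qpoints_def vec_bit_add_eq_0_iff)
  then have "on_quadric Q (vec.span {x, y})" "card (vec.span {x, y}) = 4"
    using assms by (auto simp: span_pair_bit on_quadric_def add_polar [of Q x y])
  then show ?thesis
    using card_singular_perp_on_quadric [OF vec.subspace_span, of "{x, y}"]
    by (simp add: singular_perp_span)
qed

lemma card_singular_perp_hyperbolic_pair:
  assumes "x \<in> qpoints Q" "polar Q x y \<noteq> 0"
  shows "2 * card (singular_perp {x, y}) = card (singular_perp {x})"
proof -
  have "on_quadric Q (vec.span {x})"
    using assms by (simp add: span_singleton_bit on_quadric_def qpoints_def)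
  moreover have "x \<in> vec.span {x}" "polar Q y x \<noteq> 0"
    using assms polar_commute by (auto simp: span_singleton_bit)
  moreover have "singular_perp (insert y (vec.span {x})) = singular_perp {x, y}"
    by (auto simp: singular_perp_insert singular_perp_span)
  ultimately show ?thesis
    using card_singular_perp_insert_nonperp [OF vec.subspace_span, of "{x}" x y]
    by (simp add: singular_perp_span)
qed

lemma card_nbrs_point_graph:
  assumes "x \<in> qpoints Q"
  shows "real (card (nbrs (qpoints Q) (qadj Q) x)) = (real CARD(bit^'n) + 2 * char_sum) / 4 - 2"
proof -
  have "{0, x} \<subseteq> singular_perp {x}" "card {0, x} = 2"
    using assms Q_zero polar_self polar_zero_left polar_zero_right
    by (auto simp: singular_perp_def qpoints_def)
  then show ?thesis
    using card_singular_perp_point [OF assms]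
    by (simp add: nbrs_point_graph [OF assms] of_nat_card_Diff_subset)
qed

lemma card_common_nbrs_adjacent:
  assumes "x \<in> qpoints Q" "y \<in> qpoints Q" "qadj Q x y"
  shows "real (card (nbrs (qpoints Q) (qadj Q) x \<inter> nbrs (qpoints Q) (qadj Q) y))
    = (real CARD(bit^'n) + 4 * char_sum) / 8 - 3"
proof -
  have "x \<noteq> y" "polar Q x y = 0"
    using assms qadj_iff_polar by blast+
  then have "{0, x, y} \<subseteq> singular_perp {x, y}" "card {0, x, y} = 3"
    using assms Q_zero polar_self polar_zero_left polar_zero_right polar_commute [of y x]
    by (auto simp: singular_perp_def qpoints_def)
  then show ?thesis
    using card_singular_perp_line [OF assms(1,2) \<open>x \<noteq> y\<close> \<open>polar Q x y = 0\<close>]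
    by (simp add: nbrs_Int_point_graph [OF assms(1,2)] of_nat_card_Diff_subset)
qed

lemma card_common_nbrs_nonadjacent:
  assumes "x \<in> qpoints Q" "y \<in> qpoints Q" "x \<noteq> y" "\<not> qadj Q x y"
  shows "real (card (nbrs (qpoints Q) (qadj Q) x \<inter> nbrs (qpoints Q) (qadj Q) y))
    = (real CARD(bit^'n) + 2 * char_sum) / 8 - 1"
proof -
  have "polar Q x y \<noteq> 0"
    using assms qadj_iff_polar by blast
  then have "singular_perp {x, y} - {0, x, y} = singular_perp {x, y} - {0}"
    "{0} \<subseteq> singular_perp {x, y}"
    using polar_self polar_commute [of y x] Q_zero polar_zero_left polar_zero_right
    by (auto simp: singular_perp_def)
  moreover have "2 * real (card (singular_perp {x, y})) = real (card (singular_perp {x}))"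
    using card_singular_perp_hyperbolic_pair [OF assms(1) \<open>polar Q x y \<noteq> 0\<close>]
    by (simp flip: of_nat_mult)
  ultimately show ?thesis
    using card_singular_perp_point [OF assms(1)]
    by (simp only: nbrs_Int_point_graph [OF assms(1,2)] of_nat_card_Diff_subset [OF finite]) simp
qed

theorem strongly_regular_point_graph:
  "strongly_regular (qpoints Q) (qadj Q) (card (qpoints Q))
     (nat \<lfloor>(real CARD(bit^'n) + 2 * char_sum) / 4 - 2\<rfloor>)
     (nat \<lfloor>(real CARD(bit^'n) + 4 * char_sum) / 8 - 3\<rfloor>)
     (nat \<lfloor>(real CARD(bit^'n) + 2 * char_sum) / 8 - 1\<rfloor>)"
proof -
  let ?N = "nbrs (qpoints Q) (qadj Q)"
  have "card (?N x) = nat \<lfloor>(real CARD(bit^'n) + 2 * char_sum) / 4 - 2\<rfloor>"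
    if "x \<in> qpoints Q" for x
    using card_nbrs_point_graph [OF that] by (rule eq_nat_floor_if_of_nat_eq)
  moreover have "card (?N x \<inter> ?N y) = nat \<lfloor>(real CARD(bit^'n) + 4 * char_sum) / 8 - 3\<rfloor>"
    if "x \<in> qpoints Q" "y \<in> qpoints Q" "qadj Q x y" for x y
    using card_common_nbrs_adjacent [OF that] by (rule eq_nat_floor_if_of_nat_eq)
  moreover have "card (?N x \<inter> ?N y) = nat \<lfloor>(real CARD(bit^'n) + 2 * char_sum) / 8 - 1\<rfloor>"
    if "x \<in> qpoints Q" "y \<in> qpoints Q" "x \<noteq> y" "\<not> qadj Q x y" for x y
    using card_common_nbrs_nonadjacent [OF that] by (rule eq_nat_floor_if_of_nat_eq)
  ultimately show ?thesis
    unfolding strongly_regular_def using qadj_irrefl qadj_commute by (simp only: finite) blast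
qed

section \<open>The partition into type (ii) and the remaining points\<close>

lemma Xset_eq_singular_perp:
  assumes A: "vec.subspace A" "on_quadric Q A"
  shows "Xset Q A = singular_perp A - A"
proof -
  have "0 \<in> A"
    using A(1) by (simp add: subspace_bit_iff)
  then show ?thesis
    using polar_commute
    by (auto simp: Xset_def qpoints_def singular_perp_def
        on_quadric_span_insert_iff [OF quadratic_form A])
qed

lemma nbrs_Xset:
  assumes "x \<in> qpoints Q"
  shows "nbrs (Xset Q A) (qadj Q) x = {w \<in> Xset Q A. w \<noteq> x \<and> polar Q x w = 0}"
  using assms by (auto simp: nbrs_def qadj_iff_polar Xset_def)

lemma card_Xset:
  assumes A: "vec.subspace A" "on_quadric Q A"
  shows "real (card (Xset Q A)) = real (card (singular_perp A)) - real (card A)"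
  using subset_singular_perp [OF A]
  by (simp add: Xset_eq_singular_perp [OF A] of_nat_card_Diff_subset)

lemma Xset_nonempty:
  assumes A: "quadric_subspace Q s A" and g: "projective_index Q g" "s < g"
  shows "Xset Q A \<noteq> {}"
proof -
  obtain W where W: "quadric_subspace Q g W"
    using g(1) by (auto simp: projective_index_def)
  have sub: "vec.subspace A" "on_quadric Q A" "vec.subspace W" "on_quadric Q W"
    using A W by (simp_all add: quadric_subspace_def)
  have "card A = 2 ^ (s + 1)" "card W = 2 ^ (g + 1)"
    using A W card_subspace_bit [of A] card_subspace_bit [of W]
    by (simp_all add: quadric_subspace_def)
  then have AW: "0 < real (card A)" "real (card A) < real (card W)"
    using g(2) by (simp_all add: power_strict_increasing)
  have perp:
    "real (card (singular_perp D)) = real CARD(bit^'n) / (2 * real (card D)) + char_sum / 2"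
    if "vec.subspace D" "on_quadric Q D" "0 < real (card D)" for D
  proof -
    have "real (card D) \<noteq> 0"
      using that(3) by linarith
    then show ?thesis
      using card_singular_perp_on_quadric [OF that(1,2)] by (simp add: field_simps)
  qed
  have "real (card W) \<le> real (card (singular_perp W))"
    using subset_singular_perp [OF sub(3,4)] by (simp add: card_mono)
  also have "\<dots> < real (card (singular_perp A))"
    using AW perp [OF sub(1,2)] perp [OF sub(3,4)]
    by (simp add: frac_less2)
  finally have "real (card A) < real (card (Xset Q A)) + real (card A)"
    using AW card_Xset [OF sub(1,2)] by simp
  then show ?thesis
    by auto
qed

lemma card_nbrs_Xset_of_Xset:
  assumes A: "vec.subspace A" "on_quadric Q A" and x: "x \<in> Xset Q A"
  shows "real (card (nbrs (Xset Q A) (qadj Q) x)) =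
    (real CARD(bit^'n) + 2 * real (card A) * char_sum) / (4 * real (card A)) - real (card A) - 1"
proof -
  have xA: "x \<notin> A" "x \<in> qpoints Q" and x_perp: "on_quadric Q (vec.span (insert x A))"
    using x by (auto simp: Xset_def)
  have "nbrs (Xset Q A) (qadj Q) x = singular_perp (insert x A) - insert x A"
    unfolding nbrs_Xset [OF xA(2)] unfolding Xset_eq_singular_perp [OF A]
    by (auto simp: singular_perp_insert)
  moreover have "insert x A \<subseteq> singular_perp (insert x A)"
    using subset_singular_perp [OF vec.subspace_span x_perp] vec.span_base [of _ "insert x A"]
    by (auto simp: singular_perp_span)
  ultimately have card_nbrs: "real (card (nbrs (Xset Q A) (qadj Q) x))
      = real (card (singular_perp (insert x A))) - real (card (insert x A))"
    by (simp only: of_nat_card_Diff_subset [OF finite])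
  moreover have "real (card A) \<noteq> 0"
    using A(1) by (auto simp: subspace_bit_iff card_eq_0_iff)
  moreover have "4 * real (card A) * real (card (singular_perp (insert x A)))
      = real CARD(bit^'n) + 2 * real (card A) * char_sum"
    using card_singular_perp_on_quadric [OF vec.subspace_span x_perp] xA(1)
    by (simp add: card_span_insert_subspace [OF A(1)] singular_perp_span)
  ultimately have "real (card (singular_perp (insert x A)))
      = (real CARD(bit^'n) + 2 * real (card A) * char_sum) / (4 * real (card A))"
    by (simp add: field_simps)
  then show ?thesis
    using card_nbrs xA(1) by simp
qed

lemma nbrs_Xset_of_subspace:
  assumes A: "vec.subspace A" "on_quadric Q A" and a: "a \<in> A" "a \<in> qpoints Q"
  shows "nbrs (Xset Q A) (qadj Q) a = Xset Q A"
  unfolding nbrs_Xset [OF a(2)] unfolding Xset_eq_singular_perp [OF A]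
  using a(1) by (auto simp: singular_perp_def)

lemma card_nbrs_Xset_of_Yset:
  assumes A: "vec.subspace A" "on_quadric Q A" and y: "y \<in> Yset Q A" "y \<notin> A"
  shows "2 * card (nbrs (Xset Q A) (qadj Q) y) = card (Xset Q A)"
proof -
  have yP: "y \<in> qpoints Q" and y_perp: "y \<notin> singular_perp A"
    using y Xset_eq_singular_perp [OF A] by (auto simp: Yset_def)
  then obtain a where a: "a \<in> A" "polar Q y a \<noteq> 0"
    using polar_commute by (auto simp: singular_perp_def qpoints_def)
  let ?K = "{b \<in> A. polar Q y b = 0}"
  have "nbrs (Xset Q A) (qadj Q) y = singular_perp (insert y A) - ?K"
    unfolding nbrs_Xset [OF yP] unfolding Xset_eq_singular_perp [OF A]
    using y y_perp by (auto simp: singular_perp_insert)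
  moreover have "?K \<subseteq> singular_perp (insert y A)"
    using subset_singular_perp [OF A] by (auto simp: singular_perp_insert)
  moreover have "2 * card ?K = card A"
    using card_kernel_half [OF A(1), of "polar Q y"] a by (simp add: polar_add_right)
  ultimately have "real (2 * card (nbrs (Xset Q A) (qadj Q) y))
      = real (2 * card (singular_perp (insert y A))) - real (card A)"
    by (simp add: of_nat_card_Diff_subset)
  also have "\<dots> = real (card (Xset Q A))"
    using card_singular_perp_insert_nonperp [OF A a] card_Xset [OF A] by simp
  finally show ?thesis
    by (simp only: of_nat_eq_iff)
qed

theorem godsil_mckay_partition_Xset_Yset:
  assumes A: "quadric_subspace Q s A" and g: "projective_index Q g" "s < g"
  shows "godsil_mckay_partition (qpoints Q) (qadj Q) (Xset Q A) (Yset Q A)"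
proof -
  have sub: "vec.subspace A" "on_quadric Q A"
    using A by (simp_all add: quadric_subspace_def)
  have "\<not> A \<subseteq> {0}"
    using A vec.dim_eq_0 [of A] by (simp add: quadric_subspace_def)
  then obtain a where "a \<in> A" "a \<noteq> 0"
    by blast
  then have "a \<in> Yset Q A"
    using sub(2) by (auto simp: Yset_def Xset_def qpoints_def on_quadric_def)
  moreover have "\<exists>k. \<forall>x\<in>Xset Q A. card (nbrs (Xset Q A) (qadj Q) x) = k"
    using eq_nat_floor_if_of_nat_eq [OF card_nbrs_Xset_of_Xset [OF sub]] by blast
  moreover have "2 * card (nbrs (Xset Q A) (qadj Q) y) = card (Xset Q A)
      \<or> card (nbrs (Xset Q A) (qadj Q) y) = card (Xset Q A)" if "y \<in> Yset Q A" for y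
    using that nbrs_Xset_of_subspace [OF sub] card_nbrs_Xset_of_Yset [OF sub]
    by (cases "y \<in> A") (auto simp: Yset_def)
  ultimately show ?thesis
    using Xset_nonempty [OF A g] unfolding godsil_mckay_partition_def
    by (auto simp: Yset_def Xset_def)
qed

end

section \<open>Godsil--McKay switching\<close>

definition matmul :: "'a set \<Rightarrow> ('a \<Rightarrow> 'a \<Rightarrow> real) \<Rightarrow> ('a \<Rightarrow> 'a \<Rightarrow> real) \<Rightarrow> 'a \<Rightarrow> 'a \<Rightarrow> real" where
  "matmul V P R u v = (\<Sum>w\<in>V. P u w * R w v)"

definition adj_matrix :: "('a \<Rightarrow> 'a \<Rightarrow> bool) \<Rightarrow> 'a \<Rightarrow> 'a \<Rightarrow> real" where
  "adj_matrix E u v = of_bool (E u v)"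

lemma matmul_assoc: "matmul V (matmul V P R) T = matmul V P (matmul V R T)"
  unfolding matmul_def
  by (intro ext) (simp add: sum_distrib_left sum_distrib_right mult.assoc, rule sum.swap)

lemma matmul_cong:
  "(\<And>w. w \<in> V \<Longrightarrow> P u w = P' u w) \<Longrightarrow> (\<And>w. w \<in> V \<Longrightarrow> R w v = R' w v) \<Longrightarrow>
    matmul V P R u v = matmul V P' R' u v"
  unfolding matmul_def by (rule sum.cong) auto

lemma matmul_cong_right:
  "(\<And>w. w \<in> V \<Longrightarrow> R w v = R' w v) \<Longrightarrow> matmul V P R u v = matmul V P R' u v"
  by (rule matmul_cong) auto

lemma matmul_id_left: "finite V \<Longrightarrow> u \<in> V \<Longrightarrow> matmul V (adj_matrix (=)) T u v = T u v"
  by (simp add: matmul_def adj_matrix_def)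

lemma matmul_lincomb_left:
  "matmul V (\<lambda>a d. \<alpha> * A a d + \<beta> * B a d + \<gamma>) T u v
    = \<alpha> * matmul V A T u v + \<beta> * matmul V B T u v + \<gamma> * (\<Sum>d\<in>V. T d v)"
  unfolding matmul_def by (simp add: algebra_simps sum.distrib sum_distrib_left)

lemma matmul_lincomb_right:
  "matmul V P (\<lambda>d v. \<alpha> * A d v + \<beta> * B d v + \<gamma>) u v
    = \<alpha> * matmul V P A u v + \<beta> * matmul V P B u v + \<gamma> * (\<Sum>d\<in>V. P u d)"
  unfolding matmul_def by (simp add: algebra_simps sum.distrib sum_distrib_left)

lemma matmul_adj_matrix_square:
  assumes "finite V" "\<forall>x\<in>V. \<forall>y\<in>V. E x y \<longrightarrow> E y x" "u \<in> V" "v \<in> V"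
  shows "matmul V (adj_matrix E) (adj_matrix E) u v = real (card (nbrs V E u \<inter> nbrs V E v))"
proof -
  have "matmul V (adj_matrix E) (adj_matrix E) u v = (\<Sum>w\<in>V. of_bool (w \<in> nbrs V E u \<inter> nbrs V E v))"
    unfolding matmul_def adj_matrix_def by (rule sum.cong) (use assms in \<open>auto simp: nbrs_def\<close>)
  also have "\<dots> = real (card (V \<inter> (nbrs V E u \<inter> nbrs V E v)))"
    using assms(1) by (simp only: sum_of_bool_eq Collect_mem_eq)
  also have "V \<inter> (nbrs V E u \<inter> nbrs V E v) = nbrs V E u \<inter> nbrs V E v"
    by (auto simp: nbrs_def)
  finally show ?thesis .
qed

lemma strongly_regular_iff_common_nbrs:
  "strongly_regular V E n k l m \<longleftrightarrow>
     finite V \<and> card V = n \<and> (\<forall>x\<in>V. \<not> E x x) \<and> (\<forall>x\<in>V. \<forall>y\<in>V. E x y \<longrightarrow> E y x) \<and>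
     (\<forall>u\<in>V. \<forall>v\<in>V. card (nbrs V E u \<inter> nbrs V E v) = (if u = v then k else if E u v then l else m))"
proof -
  have "(\<forall>u\<in>V. \<forall>v\<in>V. card (nbrs V E u \<inter> nbrs V E v) = (if u = v then k else if E u v then l else m))
    \<longleftrightarrow> (\<forall>x\<in>V. card (nbrs V E x) = k) \<and>
      (\<forall>x\<in>V. \<forall>y\<in>V. x \<noteq> y \<and> E x y \<longrightarrow> card (nbrs V E x \<inter> nbrs V E y) = l) \<and>
      (\<forall>x\<in>V. \<forall>y\<in>V. x \<noteq> y \<and> \<not> E x y \<longrightarrow> card (nbrs V E x \<inter> nbrs V E y) = m)"
    by (auto split: if_splits)
  then show ?thesis
    by (simp only: strongly_regular_def)
qed

lemma strongly_regular_iff_adj_matrix_square: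
  assumes "finite V" "\<forall>x\<in>V. \<not> E x x" "\<forall>x\<in>V. \<forall>y\<in>V. E x y \<longrightarrow> E y x"
  shows "strongly_regular V E n k l m \<longleftrightarrow> card V = n \<and>
     (\<forall>u\<in>V. \<forall>v\<in>V. matmul V (adj_matrix E) (adj_matrix E) u v =
        (real k - real m) * adj_matrix (=) u v + (real l - real m) * adj_matrix E u v + real m)"
proof -
  have square_iff: "matmul V (adj_matrix E) (adj_matrix E) u v =
      (real k - real m) * adj_matrix (=) u v + (real l - real m) * adj_matrix E u v + real m
    \<longleftrightarrow> card (nbrs V E u \<inter> nbrs V E v) = (if u = v then k else if E u v then l else m)"
    if "u \<in> V" "v \<in> V" for u v
  proof -
    have "matmul V (adj_matrix E) (adj_matrix E) u v = real (card (nbrs V E u \<inter> nbrs V E v))"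
      using assms that by (intro matmul_adj_matrix_square)
    moreover have "\<not> E u u"
      using assms(2) that by blast
    ultimately show ?thesis
      by (cases "u = v"; cases "E u v") (simp_all add: adj_matrix_def)
  qed
  have "(\<forall>u\<in>V. \<forall>v\<in>V. matmul V (adj_matrix E) (adj_matrix E) u v =
      (real k - real m) * adj_matrix (=) u v + (real l - real m) * adj_matrix E u v + real m)
    \<longleftrightarrow> (\<forall>u\<in>V. \<forall>v\<in>V. card (nbrs V E u \<inter> nbrs V E v) = (if u = v then k else if E u v then l else m))"
    by (intro ball_cong refl square_iff)
  then show ?thesis
    using assms by (simp only: strongly_regular_iff_common_nbrs) blast
qed

locale godsil_mckay_switching =
  fixes V :: "'a set" and E :: "'a \<Rightarrow> 'a \<Rightarrow> bool" and X Y :: "'a set"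
  assumes finite_V: "finite V" and partition: "godsil_mckay_partition V E X Y"
    and irrefl: "\<forall>x\<in>V. \<not> E x x" and sym: "\<forall>x\<in>V. \<forall>y\<in>V. E x y \<longrightarrow> E y x"
begin

lemma X_subset: "X \<subseteq> V" and X_nonempty: "X \<noteq> {}" and XY_disjoint: "X \<inter> Y = {}"
  and XY_cover: "X \<union> Y = V"
  using partition unfolding godsil_mckay_partition_def by auto

lemma X_regular: "\<exists>k. \<forall>x\<in>X. card (nbrs X E x) = k"
  and Y_nbrs_cases: "y \<in> Y \<Longrightarrow>
    card (nbrs X E y) = 0 \<or> 2 * card (nbrs X E y) = card X \<or> card (nbrs X E y) = card X"
  using partition unfolding godsil_mckay_partition_def by blast+

lemma finite_X: "finite X"
  using X_subset finite_V finite_subset by blast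

text \<open>The orthogonal involution diag((2/|X|) J - I, I) of Godsil and McKay; the switched graph
  has adjacency matrix G A G.\<close>

definition gm_matrix :: "'a \<Rightarrow> 'a \<Rightarrow> real" where
  "gm_matrix u v = (if u \<in> X \<and> v \<in> X then 2 / card X else 0) - (if u = v \<and> u \<in> X then 1 else 0)
     + (if u = v \<and> u \<notin> X then 1 else 0)"

lemma two_div_card_X_mult: "2 / real (card X) * real (card X) = 2"
  using X_nonempty finite_X by simp

lemma matmul_gm_matrix_left:
  assumes "u \<in> V"
  shows "matmul V gm_matrix R u v = (if u \<in> X then 2 / card X * (\<Sum>a\<in>X. R a v) - R u v else R u v)"
proof -
  have X_part: "(\<Sum>a\<in>V. of_bool (a \<in> X) * R a v) = (\<Sum>a\<in>X. R a v)"
    using finite_V by (simp add: Int_absorb1 [OF X_subset])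
  have "matmul V gm_matrix R u v = of_bool (u \<in> X) * (2 / card X) * (\<Sum>a\<in>V. of_bool (a \<in> X) * R a v)
      + (\<Sum>a\<in>V. of_bool (a = u) * ((if u \<in> X then -1 else 1) * R a v))"
    unfolding matmul_def sum_distrib_left sum.distrib [symmetric]
    by (rule sum.cong) (auto simp: gm_matrix_def algebra_simps)
  then show ?thesis
    using assms finite_V by (simp add: X_part)
qed

lemma matmul_gm_matrix_right:
  assumes "v \<in> V"
  shows "matmul V P gm_matrix u v = (if v \<in> X then 2 / card X * (\<Sum>b\<in>X. P u b) - P u v else P u v)"
proof -
  have X_part: "(\<Sum>b\<in>V. of_bool (b \<in> X) * P u b) = (\<Sum>b\<in>X. P u b)"
    using finite_V by (simp add: Int_absorb1 [OF X_subset])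
  have "matmul V P gm_matrix u v = of_bool (v \<in> X) * (2 / card X) * (\<Sum>b\<in>V. of_bool (b \<in> X) * P u b)
      + (\<Sum>b\<in>V. of_bool (b = v) * ((if v \<in> X then -1 else 1) * P u b))"
    unfolding matmul_def sum_distrib_left sum.distrib [symmetric]
    by (rule sum.cong) (auto simp: gm_matrix_def algebra_simps)
  then show ?thesis
    using assms finite_V by (simp add: X_part)
qed

lemma sum_gm_matrix_X: "(\<Sum>a\<in>X. gm_matrix a v) = of_bool (v \<in> X)"
  using finite_X two_div_card_X_mult
  by (cases "v \<in> X") (simp_all add: gm_matrix_def sum_subtractf sum_negf mult.commute)

lemma gm_matrix_involution:
  "u \<in> V \<Longrightarrow> v \<in> V \<Longrightarrow> matmul V gm_matrix gm_matrix u v = adj_matrix (=) u v"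
  by (simp add: matmul_gm_matrix_left sum_gm_matrix_X) (auto simp: gm_matrix_def adj_matrix_def)

lemma sum_row_gm_matrix: "u \<in> V \<Longrightarrow> (\<Sum>a\<in>V. gm_matrix u a) = 1"
  using matmul_gm_matrix_left [of u "\<lambda>_ _. 1"] two_div_card_X_mult by (simp add: matmul_def)

lemma sum_column_gm_matrix: "v \<in> V \<Longrightarrow> (\<Sum>b\<in>V. gm_matrix b v) = 1"
  using matmul_gm_matrix_right [of v "\<lambda>_ _. 1"] two_div_card_X_mult by (simp add: matmul_def)


lemma sum_adj_matrix_X:
  assumes "b \<in> V"
  shows "(\<Sum>a\<in>X. adj_matrix E b a) = real (card (nbrs X E b))"
    and "(\<Sum>a\<in>X. adj_matrix E a b) = real (card (nbrs X E b))"
proof -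
  show "(\<Sum>a\<in>X. adj_matrix E b a) = real (card (nbrs X E b))"
    using finite_X by (simp add: adj_matrix_def nbrs_def Int_def conj_commute)
  moreover have "(\<Sum>a\<in>X. adj_matrix E a b) = (\<Sum>a\<in>X. adj_matrix E b a)"
    using assms sym X_subset by (intro sum.cong) (auto simp: adj_matrix_def)
  ultimately show "(\<Sum>a\<in>X. adj_matrix E a b) = real (card (nbrs X E b))"
    by simp
qed

text \<open>Between Y and X the switched graph is (2/|X|) |N(y) \<inter> X| J - A: this is where
  the three admissible values of |N(y) \<inter> X| are used.\<close>

lemma adj_matrix_gm_switch_Y_X:
  assumes y: "y \<in> Y" and x: "x \<in> X"
  shows "adj_matrix (gm_switch V E X Y) y x = 2 / card X * card (nbrs X E y) - adj_matrix E y x"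
    and "adj_matrix (gm_switch V E X Y) x y = 2 / card X * card (nbrs X E y) - adj_matrix E x y"
proof -
  have "y \<notin> X" "x \<notin> Y" "y \<in> V" "x \<in> V"
    using x y XY_disjoint XY_cover by auto
  then have sym_xy: "E x y \<longleftrightarrow> E y x" and
    switch: "gm_switch V E X Y y x \<longleftrightarrow> (if 2 * card (nbrs X E y) = card X then \<not> E y x else E y x)"
      "gm_switch V E X Y x y \<longleftrightarrow> (if 2 * card (nbrs X E y) = card X then \<not> E x y else E x y)"
    using x y sym by (auto simp: gm_switch_def)
  have "card X \<noteq> 0"
    using X_nonempty finite_X by simp
  from Y_nbrs_cases [OF y]
  have yx: "adj_matrix (gm_switch V E X Y) y x = 2 / card X * card (nbrs X E y) - adj_matrix E y x"
  proof (elim disjE)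
    assume "card (nbrs X E y) = 0"
    then have "\<not> E y x"
      using x finite_X by (auto simp: nbrs_def)
    then show ?thesis
      using \<open>card (nbrs X E y) = 0\<close> \<open>card X \<noteq> 0\<close> by (simp add: switch adj_matrix_def)
  next
    assume half: "2 * card (nbrs X E y) = card X"
    then have "2 / card X * card (nbrs X E y) = 1"
      using \<open>card X \<noteq> 0\<close> by (simp flip: of_nat_mult)
    then show ?thesis
      using half by (simp add: switch adj_matrix_def)
  next
    assume "card (nbrs X E y) = card X"
    then have "nbrs X E y = X"
      using finite_X by (intro card_subset_eq) (auto simp: nbrs_def)
    then have "E y x"
      using x by (metis mem_Collect_eq nbrs_def)
    then show ?thesis
      using \<open>nbrs X E y = X\<close> \<open>card X \<noteq> 0\<close> by (simp add: switch adj_matrix_def)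
  qed
  moreover have "adj_matrix (gm_switch V E X Y) x y = adj_matrix (gm_switch V E X Y) y x"
    "adj_matrix E x y = adj_matrix E y x"
    using switch sym_xy by (simp_all add: adj_matrix_def)
  ultimately show
    "adj_matrix (gm_switch V E X Y) y x = 2 / card X * card (nbrs X E y) - adj_matrix E y x"
    "adj_matrix (gm_switch V E X Y) x y = 2 / card X * card (nbrs X E y) - adj_matrix E x y"
    by simp_all
qed

lemma adj_matrix_gm_switch:
  assumes u: "u \<in> V" and v: "v \<in> V"
  shows "adj_matrix (gm_switch V E X Y) u v
    = matmul V (matmul V gm_matrix (adj_matrix E)) gm_matrix u v"
proof -
  let ?c = "2 / real (card X)"
  have left: "matmul V gm_matrix (adj_matrix E) u b
      = (if u \<in> X then ?c * card (nbrs X E b) - adj_matrix E u b else adj_matrix E u b)"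
    if "b \<in> V" for b
    using u that by (simp add: matmul_gm_matrix_left sum_adj_matrix_X)
  have sum_left: "(\<Sum>b\<in>X. matmul V gm_matrix (adj_matrix E) u b)
      = (if u \<in> X then ?c * (\<Sum>b\<in>X. card (nbrs X E b)) - card (nbrs X E u) else card (nbrs X E u))"
    using u X_subset left
    by (simp add: sum_subtractf sum_distrib_left sum_adj_matrix_X subset_iff cong: sum.cong)
  have YX: "u \<notin> X \<Longrightarrow> u \<in> Y" "v \<notin> X \<Longrightarrow> v \<in> Y"
    using u v XY_cover by auto
  show ?thesis
  proof (cases "u \<in> X"; cases "v \<in> X")
    assume "u \<in> X" "v \<in> X"
    moreover obtain k where "\<forall>x\<in>X. card (nbrs X E x) = k"
      using X_regular by blast
    moreover have "card X \<noteq> 0" "u \<notin> Y" "v \<notin> Y"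
      using X_nonempty finite_X XY_disjoint \<open>u \<in> X\<close> \<open>v \<in> X\<close> by auto
    ultimately show ?thesis
      using v two_div_card_X_mult
      by (simp add: matmul_gm_matrix_right sum_left left gm_switch_def adj_matrix_def)
  next
    assume "u \<in> X" "v \<notin> X"
    then show ?thesis
      using v adj_matrix_gm_switch_Y_X(2) [OF YX(2)] by (simp add: matmul_gm_matrix_right left)
  next
    assume "u \<notin> X" "v \<in> X"
    then show ?thesis
      using v adj_matrix_gm_switch_Y_X(1) [OF YX(1)]
      by (simp add: matmul_gm_matrix_right sum_left left)
  next
    assume "u \<notin> X" "v \<notin> X"
    then show ?thesis
      using v by (simp add: matmul_gm_matrix_right left gm_switch_def adj_matrix_def)
  qed
qed

lemma gm_switch_irrefl: "\<forall>x\<in>V. \<not> gm_switch V E X Y x x"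
  using irrefl XY_disjoint by (auto simp: gm_switch_def)

lemma gm_switch_sym: "\<forall>x\<in>V. \<forall>y\<in>V. gm_switch V E X Y x y \<longrightarrow> gm_switch V E X Y y x"
  using sym by (auto simp: gm_switch_def)

theorem strongly_regular_switched:
  assumes srg: "strongly_regular V E n k l m"
  shows "strongly_regular V (gm_switch V E X Y) n k l m"
proof -
  let ?A = "adj_matrix E" and ?A' = "adj_matrix (gm_switch V E X Y)" and ?G = gm_matrix
  let ?I = "adj_matrix (=)" and ?K = "real k - real m" and ?L = "real l - real m"
  have card_V: "card V = n" and
    square: "\<And>a d. a \<in> V \<Longrightarrow> d \<in> V \<Longrightarrow> matmul V ?A ?A a d = ?K * ?I a d + ?L * ?A a d + real m"
    using srg strongly_regular_iff_adj_matrix_square [OF finite_V irrefl sym] by blast+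
  have GG: "matmul V ?G (matmul V ?G T) w v = T w v" if "w \<in> V" for T w v
  proof -
    have "matmul V ?G (matmul V ?G T) w v = matmul V (matmul V ?G ?G) T w v"
      by (simp only: matmul_assoc)
    also have "\<dots> = matmul V ?I T w v"
      using that by (intro matmul_cong) (simp_all add: gm_matrix_involution)
    finally show ?thesis
      using that finite_V by (simp add: matmul_id_left)
  qed
  have "matmul V ?A' ?A' u v = ?K * ?I u v + ?L * ?A' u v + real m" if "u \<in> V" "v \<in> V" for u v
  proof -
    let ?R = "matmul V (matmul V ?G ?A) ?G"
    have "matmul V ?A' ?A' u v = matmul V ?R ?R u v"
      using that by (intro matmul_cong) (simp_all add: adj_matrix_gm_switch)
    also have "\<dots> = matmul V ?G (matmul V ?A (matmul V ?G (matmul V ?G (matmul V ?A ?G)))) u v"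
      by (simp only: matmul_assoc)
    also have "\<dots> = matmul V ?G (matmul V ?A (matmul V ?A ?G)) u v"
      by (intro matmul_cong_right GG)
    also have "\<dots> = matmul V ?G (\<lambda>a v. ?K * ?G a v + ?L * matmul V ?A ?G a v + real m) u v"
    proof (rule matmul_cong)
      fix a assume a: "a \<in> V"
      have "matmul V ?A (matmul V ?A ?G) a v
          = matmul V (\<lambda>a d. ?K * ?I a d + ?L * ?A a d + real m) ?G a v"
        unfolding matmul_assoc [symmetric] using a by (intro matmul_cong) (simp_all add: square)
      also have "\<dots> = ?K * ?G a v + ?L * matmul V ?A ?G a v + real m"
        using a finite_V \<open>v \<in> V\<close>
        by (simp add: matmul_lincomb_left matmul_id_left sum_column_gm_matrix)
      finally show "matmul V ?A (matmul V ?A ?G) a v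
          = ?K * ?G a v + ?L * matmul V ?A ?G a v + real m" .
    qed simp
    also have "\<dots> = ?K * ?I u v + ?L * ?R u v + real m"
      using that
      by (simp add: matmul_lincomb_right gm_matrix_involution sum_row_gm_matrix matmul_assoc)
    finally show ?thesis
      using that by (simp add: adj_matrix_gm_switch)
  qed
  then show ?thesis
    using card_V strongly_regular_iff_adj_matrix_square [OF finite_V gm_switch_irrefl gm_switch_sym]
    by blast
qed

end

lemma strongly_regular_gm_switch:
  assumes "strongly_regular V E n k l m" and "godsil_mckay_partition V E X Y"
  shows "strongly_regular V (gm_switch V E X Y) n k l m"
proof -
  interpret godsil_mckay_switching V E X Y
    using assms unfolding strongly_regular_def by unfold_locales auto
  show ?thesis
    using assms(1) by (rule strongly_regular_switched)
qed

theorem theorem3p3: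
  fixes Q :: "bit^'n \<Rightarrow> bit" and A :: "(bit^'n) set" and g s :: nat
  assumes "nonsingular_quadric Q"
    and "projective_index Q g" and "g \<ge> 1"
    and "s < g"
    and "quadric_subspace Q s A"
  shows "godsil_mckay_partition (qpoints Q) (qadj Q) (Xset Q A) (Yset Q A) \<and>
         (\<exists>v k l m. strongly_regular (qpoints Q) (qadj Q) v k l m \<and>
            strongly_regular (qpoints Q)
              (gm_switch (qpoints Q) (qadj Q) (Xset Q A) (Yset Q A)) v k l m)"
proof -
  interpret nonsingular_quadric_form Q
    by unfold_locales (rule assms(1))
  have partition: "godsil_mckay_partition (qpoints Q) (qadj Q) (Xset Q A) (Yset Q A)"
    using assms(5,2,4) by (rule godsil_mckay_partition_Xset_Yset)
  show ?thesis
    using partition strongly_regular_point_graph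
      strongly_regular_gm_switch [OF strongly_regular_point_graph partition]
    by blast
qed

end
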